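(* Let $n\ge2$ and suppose $G_{\text{hon}}$ is connected. For every integer $j\ge3$ and every real $\iota>1$, $$\mathbb P\big(\bar\tau_{\text{spr}}>\iota\, j\log(j)/\Upsilon\big)\le\mathbb P(\underline\tau_{\text{spr}}>j)+27\,n\,j^{1-\iota}.$$
   Context: $G=([n+m],E)$ undirected, honest agents $[n]$; for $i\in[n]$, $N_{\text{hon}}(i)$ its honest neighbors, $d_{\text{hon}}(i)=|N_{\text{hon}}(i)|$, $d(i)$ its total degree; $G_{\text{hon}}$ is the subgraph induced on $[n]$; $\Upsilon=\min_{i\in[n]}d_{\text{hon}}(i)/d(i)$; $i^\star\in[n]$ is fixed. Noisy rumor process: for each $i\in[n]$, $\{\bar Y_j^{(i)}\}_{j\ge1}$ i.i.d. Bernoulli$(\Upsilon)$ and $\{\bar H_j^{(i)}\}_{j\ge1}$ i.i.d. uniform on $N_{\text{hon}}(i)$, all independent; $\bar{\mathcal I}_0=\{i^\star\}$, $\bar{\mathcal I}_j=\bar{\mathcal I}_{j-1}\cup\{i\in[n]\setminus\bar{\mathcal I}_{j-1}:\bar Y_j^{(i)}=1,\bar H_j^{(i)}\in\bar{\mathcal I}_{j-1}\}$; $\bar\tau_{\text{spr}}=\inf\{j\in\mathbb N:\bar{\mathcal I}_j=[n]\}$. Noiseless process: $\{\underline H_j^{(i)}\}$ i.i.d. uniform on $N_{\text{hon}}(i)$; $\underline{\mathcal I}_0=\{i^\star\}$, $\underline{\mathcal I}_j=\underline{\mathcal I}_{j-1}\cup\{i\notin\underline{\mathcal I}_{j-1}:\underline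 H_j^{(i)}\in\underline{\mathcal I}_{j-1}\}$; $\underline\tau_{\text{spr}}=\inf\{j:\underline{\mathcal I}_j=[n]\}$. (The inequality concerns the marginal distributions of $\bar\tau_{\text{spr}}$ and $\underline\tau_{\text{spr}}$.) *)

theory Defs
  imports "HOL-Probability.Probability"
begin

(* Vertices of G are {1..n+m}; honest agents are [n] = {1..n}.
   The undirected graph is a symmetric irreflexive edge relation E. *)

definition Nhon :: "(nat \<times> nat) set \<Rightarrow> nat \<Rightarrow> nat \<Rightarrow> nat set" where
  "Nhon E n i = {k \<in> {1..n}. (i, k) \<in> E}"

definition deg :: "(nat \<times> nat) set \<Rightarrow> nat \<Rightarrow> nat \<Rightarrow> nat \<Rightarrow> nat" where
  "deg E n m i = card {k \<in> {1..n+m}. (i, k) \<in> E}"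

definition Upsilon :: "(nat \<times> nat) set \<Rightarrow> nat \<Rightarrow> nat \<Rightarrow> real" where
  "Upsilon E n m = Min ((\<lambda>i. real (card (Nhon E n i)) / real (deg E n m i)) ` {1..n})"

definition simple_graph :: "(nat \<times> nat) set \<Rightarrow> nat \<Rightarrow> bool" where
  "simple_graph E N \<longleftrightarrow> E \<subseteq> {1..N} \<times> {1..N} \<and> sym E \<and> (\<forall>x. (x, x) \<notin> E)"

definition hon_connected :: "(nat \<times> nat) set \<Rightarrow> nat \<Rightarrow> bool" where
  "hon_connected E n \<longleftrightarrow>
     (\<forall>a\<in>{1..n}. \<forall>b\<in>{1..n}. (a, b) \<in> (E \<inter> ({1..n} \<times> {1..n}))\<^sup>*)"

fun noisy_inf :: "nat \<Rightarrow> nat \<Rightarrow> (nat \<Rightarrow> nat \<Rightarrow> bool) \<Rightarrow> (nat \<Rightarrow> nat \<Rightarrow> nat) \<Rightarrow> nat \<Rightarrow> nat set" where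
  "noisy_inf n istar Y H 0 = {istar}"
| "noisy_inf n istar Y H (Suc j) =
     noisy_inf n istar Y H j \<union>
     {i \<in> {1..n} - noisy_inf n istar Y H j. Y (Suc j) i \<and> H (Suc j) i \<in> noisy_inf n istar Y H j}"

fun noiseless_inf :: "nat \<Rightarrow> nat \<Rightarrow> (nat \<Rightarrow> nat \<Rightarrow> nat) \<Rightarrow> nat \<Rightarrow> nat set" where
  "noiseless_inf n istar H 0 = {istar}"
| "noiseless_inf n istar H (Suc j) =
     noiseless_inf n istar H j \<union>
     {i \<in> {1..n} - noiseless_inf n istar H j. H (Suc j) i \<in> noiseless_inf n istar H j}"

definition spread_time :: "nat \<Rightarrow> (nat \<Rightarrow> nat set) \<Rightarrow> enat" where
  "spread_time n I = (if \<exists>j. I j = {1..n} then enat (LEAST j. I j = {1..n}) else \<infinity>)"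

end

theory Submission
  imports Defs
begin

text \<open>Cut the rounds of the noisy process into consecutive blocks of
  \<open>L = \<lfloor>\<iota> j log j / \<Upsilon>\<rfloor> div j\<close> rounds.  In block \<open>k\<close> every honest agent keeps the neighbour it
  sampled in the first round of the block whose coin \<open>Y\<close> succeeded (the last round if none did).
  These block choices are again independent and uniform on the honest neighbourhoods, so they drive a
  copy of the noiseless process; and as long as every agent succeeds at least once in each of the
  first \<open>j\<close> blocks, this copy after \<open>j\<close> steps is contained in the noisy process after \<open>j L\<close> rounds.
  An agent misses a whole block with probability \<open>(1 - \<Upsilon>)\<^sup>L \<le> e j\<^sup>-\<^sup>\<iota>\<close>, and a union bound over the
  \<open>n j\<close> pairs (block, agent) gives the error term.\<close>

section \<open>Rumor processes\<close>

lemma noisy_inf_subset: "istar \<in> {1..n} \<Longrightarrow> noisy_inf n istar Y H k \<subseteq> {1..n}"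
  by (induction k) auto

lemma noiseless_inf_subset: "istar \<in> {1..n} \<Longrightarrow> noiseless_inf n istar H k \<subseteq> {1..n}"
  by (induction k) auto

lemma mono_noisy_inf: "mono (noisy_inf n istar Y H)"
  by (rule incseq_SucI) auto

lemma mono_noiseless_inf: "mono (noiseless_inf n istar H)"
  by (rule incseq_SucI) auto

lemma noiseless_inf_cong:
  assumes "\<And>k i. k \<in> {1..j} \<Longrightarrow> i \<in> {1..n} \<Longrightarrow> H k i = H' k i" and "k \<le> j"
  shows "noiseless_inf n istar H k = noiseless_inf n istar H' k"
  using assms(2)
proof (induction k)
  case (Suc k)
  then have "\<And>i. i \<in> {1..n} \<Longrightarrow> H (Suc k) i = H' (Suc k) i" using assms(1) by simp
  with Suc show ?case by auto
qed simp

lemma noisy_inf_cong: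
  assumes "\<And>t i. t \<in> {1..T} \<Longrightarrow> i \<in> {1..n} \<Longrightarrow> Y t i = Y' t i \<and> H t i = H' t i" and "k \<le> T"
  shows "noisy_inf n istar Y H k = noisy_inf n istar Y' H' k"
  using assms(2)
proof (induction k)
  case (Suc k)
  then have "\<And>i. i \<in> {1..n} \<Longrightarrow> Y (Suc k) i = Y' (Suc k) i \<and> H (Suc k) i = H' (Suc k) i"
    using assms(1) by simp
  with Suc show ?case by auto
qed simp

lemma spread_time_gt_iff:
  assumes "mono I" and "\<And>k. I k \<subseteq> {1..n}"
  shows "enat j < spread_time n I \<longleftrightarrow> I j \<noteq> {1..n}"
proof
  assume "enat j < spread_time n I"
  then show "I j \<noteq> {1..n}"
    unfolding spread_time_def by (auto split: if_splits dest: Least_le)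
next
  assume not_full: "I j \<noteq> {1..n}"
  have after_j: "j < k" if "I k = {1..n}" for k
    using monoD[OF assms(1), of k j] that assms(2)[of j] not_full by (cases "j < k") auto
  show "enat j < spread_time n I"
  proof (cases "\<exists>k. I k = {1..n}")
    case True
    then have "I (LEAST k. I k = {1..n}) = {1..n}" by (rule LeastI_ex)
    with True show ?thesis by (simp add: spread_time_def after_j)
  qed (simp add: spread_time_def)
qed

lemma noisy_inf_not_full_if_spread_time_gt:
  assumes "istar \<in> {1..n}" and "ereal x < ereal_of_enat (spread_time n (noisy_inf n istar Y H))"
    and "real T \<le> x"
  shows "noisy_inf n istar Y H T \<noteq> {1..n}"
proof -
  have "enat T < spread_time n (noisy_inf n istar Y H)"
    using assms(2,3) by (cases "spread_time n (noisy_inf n istar Y H)") auto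
  then show ?thesis
    using spread_time_gt_iff[OF mono_noisy_inf noisy_inf_subset[OF assms(1)]] by blast
qed

section \<open>First success in a block of rounds\<close>

definition first_in :: "nat set \<Rightarrow> (nat \<Rightarrow> bool) \<Rightarrow> nat" where
  "first_in B y = (if \<exists>t\<in>B. y t then LEAST t. t \<in> B \<and> y t else Max B)"

lemma first_in_mem: "finite B \<Longrightarrow> B \<noteq> {} \<Longrightarrow> first_in B y \<in> B"
  unfolding first_in_def by (auto intro: LeastI2_ex)

lemma first_in_success: "\<exists>t\<in>B. y t \<Longrightarrow> y (first_in B y)"
  unfolding first_in_def by (auto intro: LeastI2_ex)

lemma first_in_cong: "(\<And>t. t \<in> B \<Longrightarrow> y t = y' t) \<Longrightarrow> first_in B y = first_in B y'"
  unfolding first_in_def by (simp cong: conj_cong)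

lemma first_in_eq_iff:
  assumes "finite B" "t \<in> B"
  shows "first_in B y = t \<longleftrightarrow> (\<forall>s\<in>B. s < t \<longrightarrow> \<not> y s) \<and> (t \<noteq> Max B \<longrightarrow> y t)"
proof (cases "\<exists>s\<in>B. y s")
  case True
  have "(LEAST s. s \<in> B \<and> y s) = t \<longleftrightarrow> (\<forall>s\<in>B. s < t \<longrightarrow> \<not> y s) \<and> y t"
    using assms(2) by (metis (mono_tags, lifting) LeastI_ex Least_equality True not_less
        not_less_Least)
  moreover have "(\<forall>s\<in>B. s < t \<longrightarrow> \<not> y s) \<Longrightarrow> t = Max B \<Longrightarrow> y t"
    using True assms by (metis Max_ge order_le_less)
  ultimately show ?thesis
    using True unfolding first_in_def by auto
qed (use assms in \<open>auto simp: first_in_def\<close>)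

definition round_block :: "nat \<Rightarrow> nat \<Rightarrow> nat set" where
  "round_block L k = {(k - 1) * L <.. k * L}"

lemma finite_round_block [simp]: "finite (round_block L k)"
  by (simp add: round_block_def)

lemma card_round_block: "1 \<le> k \<Longrightarrow> card (round_block L k) = L"
  by (cases k) (auto simp: round_block_def)

lemma round_block_nonempty: "1 \<le> L \<Longrightarrow> 1 \<le> k \<Longrightarrow> round_block L k \<noteq> {}"
  by (cases k) (auto simp: round_block_def)

lemma round_block_subset: "round_block L k \<subseteq> {1..}"
  by (auto simp: round_block_def)

lemma disjoint_round_block:
  assumes "k \<noteq> k'"
  shows "round_block L k \<inter> round_block L k' = {}"
proof -
  have "round_block L k \<inter> round_block L k' = {}" if "k < k'" for k k'
  proof -
    have "k * L \<le> (k' - 1) * L"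
      using that by (intro mult_le_mono1) simp
    then show ?thesis
      by (auto simp: round_block_def)
  qed
  then show ?thesis
    using assms by (metis inf_commute linorder_neqE_nat)
qed

lemma noiseless_block_choices_subset_noisy_inf:
  assumes success: "\<And>k i. k \<in> {1..j} \<Longrightarrow> i \<in> {1..n} \<Longrightarrow> \<exists>t\<in>round_block L k. Y t i"
    and "k \<le> j"
  shows "noiseless_inf n istar (\<lambda>k i. H (first_in (round_block L k) (\<lambda>t. Y t i)) i) k
           \<subseteq> noisy_inf n istar Y H (k * L)"
  using \<open>k \<le> j\<close>
proof (induction k)
  case (Suc k)
  let ?H = "\<lambda>k i. H (first_in (round_block L k) (\<lambda>t. Y t i)) i"
  have IH: "noiseless_inf n istar ?H k \<subseteq> noisy_inf n istar Y H (k * L)"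
    using Suc by simp
  have "x \<in> noisy_inf n istar Y H (Suc k * L)"
    if x: "x \<in> {1..n}" "?H (Suc k) x \<in> noiseless_inf n istar ?H k" for x
  proof -
    let ?t = "first_in (round_block L (Suc k)) (\<lambda>t. Y t x)"
    have "\<exists>t\<in>round_block L (Suc k). Y t x"
      using success x Suc.prems by simp
    then have "?t \<in> round_block L (Suc k)" and Y_t: "Y ?t x"
      by (auto intro: first_in_mem first_in_success)
    then obtain s where t: "?t = Suc s" "k * L \<le> s" "Suc s \<le> Suc k * L"
      by (cases ?t) (auto simp: round_block_def)
    have "H (Suc s) x \<in> noisy_inf n istar Y H (k * L)"
      using x(2) IH t(1) by auto
    then have "H (Suc s) x \<in> noisy_inf n istar Y H s"
      using monoD[OF mono_noisy_inf[of n istar Y H] t(2)] by blast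
    then have "x \<in> noisy_inf n istar Y H (Suc s)"
      using x(1) Y_t t(1) by auto
    then show ?thesis
      using monoD[OF mono_noisy_inf[of n istar Y H] t(3)] by blast
  qed
  moreover have "noisy_inf n istar Y H (k * L) \<subseteq> noisy_inf n istar Y H (Suc k * L)"
    by (intro monoD[OF mono_noisy_inf]) simp
  ultimately show ?case
    using IH by auto
qed simp

lemma noisy_inf_not_spread_cases:
  assumes "istar \<in> {1..n}" and "noisy_inf n istar Y H (j * L) \<noteq> {1..n}"
  shows "noiseless_inf n istar (\<lambda>k i. H (first_in (round_block L k) (\<lambda>t. Y t i)) i) j \<noteq> {1..n}
         \<or> (\<exists>k\<in>{1..j}. \<exists>i\<in>{1..n}. \<forall>t\<in>round_block L k. \<not> Y t i)"
  using noiseless_block_choices_subset_noisy_inf[of j n L Y j istar H]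
    noisy_inf_subset[OF assms(1), of Y H "j * L"] assms(2)
  by blast

section \<open>Independent random variables with countable values\<close>

lemma sets_PiM_count_space_countable:
  assumes "finite J"
  shows "sets (PiM J (\<lambda>_. count_space (UNIV :: 'b :: countable set))) = Pow (PiE J (\<lambda>_. UNIV))"
proof
  show "sets (PiM J (\<lambda>_. count_space (UNIV :: 'b set))) \<subseteq> Pow (PiE J (\<lambda>_. UNIV))"
    using sets.sets_into_space[of _ "PiM J (\<lambda>_. count_space (UNIV :: 'b set))"]
    by (auto simp: space_PiM)
  show "Pow (PiE J (\<lambda>_. UNIV)) \<subseteq> sets (PiM J (\<lambda>_. count_space (UNIV :: 'b set)))"
  proof
    fix A assume A: "A \<in> Pow (PiE J (\<lambda>_. UNIV :: 'b set))"
    then have "countable A"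
      using countable_PiE[OF assms, of "\<lambda>_. UNIV :: 'b set"] by (auto intro: countable_subset)
    moreover have "PiE J (\<lambda>x. {f x}) = {f}" if "f \<in> A" for f
    proof -
      have "f \<in> PiE J (\<lambda>_. UNIV)"
        using A that by auto
      then show ?thesis
        by (auto simp: PiE_iff extensional_def fun_eq_iff) metis
    qed
    then have "A = (\<Union>f\<in>A. PiE J (\<lambda>x. {f x}))"
      by auto
    ultimately show "A \<in> sets (PiM J (\<lambda>_. count_space (UNIV :: 'b set)))"
      using assms by (metis sets.countable_UN'' sets_PiM_I_finite sets_count_space Pow_UNIV UNIV_I)
  qed
qed

lemma measurable_PiM_count_space_countable:
  "finite J \<Longrightarrow> f \<in> measurable (PiM J (\<lambda>_. count_space (UNIV :: 'b :: countable set))) (count_space UNIV)"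
  by (subst measurable_cong_sets[where M' = "count_space (PiE J (\<lambda>_. UNIV))" and N' = "count_space UNIV"])
     (simp_all add: sets_PiM_count_space_countable)

context prob_space
begin

lemma measurable_through_restrict:
  fixes X :: "'i \<Rightarrow> 'a \<Rightarrow> 'b :: countable"
  assumes "finite J" and "\<And>x. x \<in> J \<Longrightarrow> random_variable (count_space UNIV) (X x)"
    and "\<And>\<omega>. \<omega> \<in> space M \<Longrightarrow> F \<omega> = \<Phi> (\<lambda>x\<in>J. X x \<omega>)"
  shows "F \<in> measurable M (count_space UNIV)"
proof -
  have "(\<lambda>\<omega>. \<Phi> (\<lambda>x\<in>J. X x \<omega>)) \<in> measurable M (count_space UNIV)"
    using measurable_PiM_count_space_countable[OF assms(1)] assms(2)
    by (intro measurable_comp[OF measurable_restrict, unfolded comp_def]) auto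
  then show ?thesis
    using assms(3) by (subst measurable_cong) auto
qed

lemma events_through_restrict:
  fixes X :: "'i \<Rightarrow> 'a \<Rightarrow> 'b :: countable"
  assumes "finite J" and "\<And>x. x \<in> J \<Longrightarrow> random_variable (count_space UNIV) (X x)"
    and "\<And>\<omega>. \<omega> \<in> space M \<Longrightarrow> F \<omega> = \<Phi> (\<lambda>x\<in>J. X x \<omega>)"
  shows "{\<omega>\<in>space M. P (F \<omega>)} \<in> events"
proof -
  have "F \<in> measurable M (count_space UNIV)"
    by (rule measurable_through_restrict[where \<Phi> = \<Phi>]) (use assms in auto)
  from measurable_sets[OF this, of "{x. P x}"] show ?thesis
    by (simp add: vimage_def Int_def conj_commute)
qed

lemma prob_restrict_eq_PiM:
  fixes X :: "'i \<Rightarrow> 'a \<Rightarrow> 'b :: countable"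
  assumes "finite J" "J \<noteq> {}" and indep: "indep_vars (\<lambda>_. count_space UNIV) X J"
  shows "prob {\<omega>\<in>space M. (\<lambda>x\<in>J. X x \<omega>) \<in> S}
       = measure (PiM J (\<lambda>x. distr M (count_space UNIV) (X x))) (S \<inter> PiE J (\<lambda>_. UNIV))"
proof -
  have rv: "\<And>x. x \<in> J \<Longrightarrow> random_variable (count_space UNIV) (X x)"
    using indep unfolding indep_vars_def2 by auto
  have "PiM J (\<lambda>x. distr M (count_space UNIV) (X x))
      = distr M (PiM J (\<lambda>_. count_space UNIV)) (\<lambda>\<omega>. \<lambda>x\<in>J. X x \<omega>)"
    using indep_vars_iff_distr_eq_PiM'[OF assms(2) rv] indep by simp
  moreover have "S \<inter> PiE J (\<lambda>_. UNIV) \<in> sets (PiM J (\<lambda>_. count_space (UNIV :: 'b set)))"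
    using sets_PiM_count_space_countable[OF assms(1)] by auto
  ultimately have "measure (PiM J (\<lambda>x. distr M (count_space UNIV) (X x))) (S \<inter> PiE J (\<lambda>_. UNIV))
      = prob ((\<lambda>\<omega>. \<lambda>x\<in>J. X x \<omega>) -` (S \<inter> PiE J (\<lambda>_. UNIV)) \<inter> space M)"
    using rv by (simp add: measure_distr measurable_restrict)
  also have "(\<lambda>\<omega>. \<lambda>x\<in>J. X x \<omega>) -` (S \<inter> PiE J (\<lambda>_. UNIV)) \<inter> space M
      = {\<omega>\<in>space M. (\<lambda>x\<in>J. X x \<omega>) \<in> S}"
    by auto
  finally show ?thesis ..
qed

lemma indep_vars_reindex:
  assumes indep: "indep_vars M' X I" and inj: "inj_on f J" and "f ` J \<subseteq> I"
  shows "indep_vars (\<lambda>j. M' (f j)) (\<lambda>j. X (f j)) J"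
  unfolding indep_vars_def2
proof (intro conjI ballI indep_setsI)
  have rv: "random_variable (M' (f j)) (X (f j))" if "j \<in> J" for j
    using indep that assms(3) unfolding indep_vars_def2 by auto
  then show "random_variable (M' (f j)) (X (f j))" if "j \<in> J" for j
    using that .
  show "{X (f j) -` A \<inter> space M |A. A \<in> sets (M' (f j))} \<subseteq> events" if "j \<in> J" for j
    using measurable_sets[OF rv[OF that]] by blast
  fix K A assume K: "K \<noteq> {}" "K \<subseteq> J" "finite K"
    and A: "\<forall>j\<in>K. A j \<in> {X (f j) -` B \<inter> space M |B. B \<in> sets (M' (f j))}"
  then have "\<forall>j\<in>K. \<exists>B. A j = X (f j) -` B \<inter> space M \<and> B \<in> sets (M' (f j))"
    by blast
  from bchoice[OF this] obtain B
    where B: "\<forall>j\<in>K. A j = X (f j) -` B j \<inter> space M \<and> B j \<in> sets (M' (f j))"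
    by blast
  have inj_K: "inj_on f K"
    using inj_on_subset[OF inj K(2)] .
  define B' where "B' i = B (the_inv_into K f i)" for i
  have B'_f: "B' (f j) = B j" if "j \<in> K" for j
    unfolding B'_def using the_inv_into_f_f[OF inj_K that] by simp
  have "prob (\<Inter>i\<in>f ` K. X i -` B' i \<inter> space M) = (\<Prod>i\<in>f ` K. prob (X i -` B' i \<inter> space M))"
    by (rule indep_varsD[OF indep]) (use K assms(3) B B'_f in auto)
  moreover have "(\<Inter>j\<in>K. A j) = (\<Inter>i\<in>f ` K. X i -` B' i \<inter> space M)"
    using B B'_f K(1) by auto
  moreover have "(\<Prod>j\<in>K. prob (A j)) = (\<Prod>i\<in>f ` K. prob (X i -` B' i \<inter> space M))"
    using B B'_f by (simp add: prod.reindex[OF inj_K])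
  ultimately show "prob (\<Inter>j\<in>K. A j) = (\<Prod>j\<in>K. prob (A j))"
    by simp
qed

end

lemma prob_eq_if_indep_same_distr:
  fixes X :: "'i \<Rightarrow> 'a \<Rightarrow> 'c :: countable" and Z :: "'i \<Rightarrow> 'b \<Rightarrow> 'c"
  assumes "prob_space M" "prob_space N" "finite J" "J \<noteq> {}"
    and "prob_space.indep_vars M (\<lambda>_. count_space UNIV) X J"
    and "prob_space.indep_vars N (\<lambda>_. count_space UNIV) Z J"
    and "\<And>x. x \<in> J \<Longrightarrow> distr M (count_space UNIV) (X x) = distr N (count_space UNIV) (Z x)"
  shows "measure M {\<omega>\<in>space M. (\<lambda>x\<in>J. X x \<omega>) \<in> S} = measure N {\<omega>\<in>space N. (\<lambda>x\<in>J. Z x \<omega>) \<in> S}"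
proof -
  have "PiM J (\<lambda>x. distr M (count_space UNIV) (X x)) = PiM J (\<lambda>x. distr N (count_space UNIV) (Z x))"
    by (rule PiM_cong) (simp_all add: assms(7))
  then show ?thesis
    using prob_space.prob_restrict_eq_PiM[OF assms(1,3,4,5)]
      prob_space.prob_restrict_eq_PiM[OF assms(2,3,4,6)] by simp
qed

context prob_space
begin

lemma prob_first_in_eq_and_snd:
  fixes X :: "nat \<Rightarrow> 'a \<Rightarrow> bool \<times> 'c :: countable"
  assumes indep: "indep_vars (\<lambda>_. count_space UNIV) X B" and B: "finite B" "t \<in> B"
    and law: "\<And>s. s \<in> B \<Longrightarrow> distr M (count_space UNIV) (X s) = measure_pmf (pair_pmf p q)"
  shows "prob {\<omega>\<in>space M. first_in B (\<lambda>s. fst (X s \<omega>)) = t \<and> snd (X t \<omega>) \<in> A}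
       = prob {\<omega>\<in>space M. first_in B (\<lambda>s. fst (X s \<omega>)) = t} * measure_pmf.prob q A"
proof -
  \<comment> \<open>the last round of \<open>B\<close> is selected whether or not its coin succeeds\<close>
  define R where "R = (if t = Max B then UNIV else {True})"
  define C where "C = (\<Prod>s\<in>{s\<in>B. s < t}. prob (X s -` ({False} \<times> UNIV) \<inter> space M))"
  define K where "K = {s\<in>B. s \<le> t}"
  have K: "K \<noteq> {}" "finite K" "K \<subseteq> B" "t \<in> K" "K - {t} = {s\<in>B. s < t}"
    using B by (auto simp: K_def)
  have prob_X: "prob (X s -` D \<inter> space M) = measure_pmf.prob (pair_pmf p q) D" if "s \<in> B" for s D
  proof -
    have "random_variable (count_space UNIV) (X s)"
      using indep that unfolding indep_vars_def2 by auto
    then have "measure (distr M (count_space UNIV) (X s)) D = prob (X s -` D \<inter> space M)"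
      by (intro measure_distr) auto
    then show ?thesis
      using law[OF that] by simp
  qed
  have prob_event: "prob {\<omega>\<in>space M. first_in B (\<lambda>s. fst (X s \<omega>)) = t \<and> snd (X t \<omega>) \<in> A'}
      = measure_pmf.prob p R * measure_pmf.prob q A' * C" for A'
  proof -
    define D where "D s = (if s = t then R \<times> A' else {False} \<times> UNIV)" for s
    have "(\<forall>s\<in>K. X s \<omega> \<in> D s) \<longleftrightarrow> (\<forall>s\<in>B. s < t \<longrightarrow> \<not> fst (X s \<omega>)) \<and> X t \<omega> \<in> R \<times> A'" for \<omega>
      using K by (auto simp: K_def D_def mem_Times_iff)
    moreover have "X t \<omega> \<in> R \<times> A' \<longleftrightarrow> (t \<noteq> Max B \<longrightarrow> fst (X t \<omega>)) \<and> snd (X t \<omega>) \<in> A'" for \<omega>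
      by (auto simp: R_def mem_Times_iff)
    ultimately have "first_in B (\<lambda>s. fst (X s \<omega>)) = t \<and> snd (X t \<omega>) \<in> A' \<longleftrightarrow> (\<forall>s\<in>K. X s \<omega> \<in> D s)"
      for \<omega>
      by (simp add: first_in_eq_iff[OF B])
    then have "{\<omega>\<in>space M. first_in B (\<lambda>s. fst (X s \<omega>)) = t \<and> snd (X t \<omega>) \<in> A'}
        = (\<Inter>s\<in>K. X s -` D s \<inter> space M)"
      using K(1) by blast
    also have "prob \<dots> = (\<Prod>s\<in>K. prob (X s -` D s \<inter> space M))"
      using K by (intro indep_varsD[OF indep]) auto
    also have "\<dots> = prob (X t -` D t \<inter> space M) * (\<Prod>s\<in>K - {t}. prob (X s -` D s \<inter> space M))"
      using K by (intro prod.remove) auto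
    also have "(\<Prod>s\<in>K - {t}. prob (X s -` D s \<inter> space M)) = C"
      unfolding K(5) C_def D_def by (intro prod.cong) auto
    also have "prob (X t -` D t \<inter> space M) = measure_pmf.prob p R * measure_pmf.prob q A'"
      using prob_X[OF B(2)] by (simp add: D_def measure_pmf_prob_product)
    finally show ?thesis .
  qed
  show ?thesis
    using prob_event[of A] prob_event[of UNIV] by simp
qed

lemma distr_snd_at_first_in:
  fixes X :: "nat \<Rightarrow> 'a \<Rightarrow> bool \<times> 'c :: countable"
  assumes indep: "indep_vars (\<lambda>_. count_space UNIV) X B" and B: "finite B" "B \<noteq> {}"
    and law: "\<And>s. s \<in> B \<Longrightarrow> distr M (count_space UNIV) (X s) = measure_pmf (pair_pmf p q)"
  shows "distr M (count_space UNIV) (\<lambda>\<omega>. snd (X (first_in B (\<lambda>s. fst (X s \<omega>))) \<omega>)) = measure_pmf q"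
proof -
  define S where "S \<omega> = first_in B (\<lambda>s. fst (X s \<omega>))" for \<omega>
  define Z where "Z \<omega> = snd (X (S \<omega>) \<omega>)" for \<omega>
  have rv: "random_variable (count_space UNIV) (X s)" if "s \<in> B" for s
    using indep that unfolding indep_vars_def2 by auto
  have S_in: "S \<omega> \<in> B" for \<omega>
    unfolding S_def using B by (rule first_in_mem)
  have S_restrict: "S \<omega> = first_in B (\<lambda>s. fst ((\<lambda>s\<in>B. X s \<omega>) s))" for \<omega>
    unfolding S_def by (rule first_in_cong) simp
  have events: "{\<omega>\<in>space M. P (\<lambda>s\<in>B. X s \<omega>)} \<in> events" for P
    by (rule events_through_restrict[where F = "\<lambda>\<omega>. \<lambda>s\<in>B. X s \<omega>" and \<Phi> = id])
       (use B rv in auto)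
  have "Z \<omega> = snd ((\<lambda>s\<in>B. X s \<omega>) (S \<omega>))" for \<omega>
    using S_in by (simp add: Z_def)
  then have Z_restrict: "Z \<omega> = snd ((\<lambda>s\<in>B. X s \<omega>) (first_in B (\<lambda>s. fst ((\<lambda>s\<in>B. X s \<omega>) s))))" for \<omega>
    by (simp only: S_restrict)
  have Z_measurable: "Z \<in> measurable M (count_space UNIV)"
    by (rule measurable_through_restrict[where \<Phi> = "\<lambda>v. snd (v (first_in B (\<lambda>s. fst (v s))))",
          OF B(1) rv Z_restrict])
  have prob_Z: "prob (Z -` {h} \<inter> space M) = pmf q h" for h
  proof -
    have disj: "disjoint_family_on (\<lambda>t. {\<omega>\<in>space M. S \<omega> = t \<and> P t \<omega>}) B" for P
      by (auto simp: disjoint_family_on_def)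
    have ev: "{\<omega>\<in>space M. S \<omega> = t \<and> P (X t \<omega>)} \<in> events" if "t \<in> B" for t P
      using events[of "\<lambda>v. first_in B (\<lambda>s. fst (v s)) = t \<and> P (v t)"] that by (simp add: S_restrict)
    have "Z -` {h} \<inter> space M = (\<Union>t\<in>B. {\<omega>\<in>space M. S \<omega> = t \<and> snd (X t \<omega>) = h})"
      using S_in by (auto simp: Z_def)
    also have "prob \<dots> = (\<Sum>t\<in>B. prob {\<omega>\<in>space M. S \<omega> = t \<and> snd (X t \<omega>) \<in> {h}})"
      using B disj ev[of _ "\<lambda>x. snd x = h"]
      by (subst finite_measure_finite_Union) auto
    also have "\<dots> = (\<Sum>t\<in>B. prob {\<omega>\<in>space M. S \<omega> = t} * pmf q h)"
      unfolding S_def using prob_first_in_eq_and_snd[OF indep B(1) _ law, of _ "{h}"]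
      by (intro sum.cong) (simp_all add: measure_pmf_single)
    also have "\<dots> = (\<Sum>t\<in>B. prob {\<omega>\<in>space M. S \<omega> = t}) * pmf q h"
      by (simp add: sum_distrib_right)
    also have "(\<Sum>t\<in>B. prob {\<omega>\<in>space M. S \<omega> = t}) = prob (\<Union>t\<in>B. {\<omega>\<in>space M. S \<omega> = t})"
      using B disj[of "\<lambda>_ _. True"] ev[of _ "\<lambda>_. True"] by (subst finite_measure_finite_Union) auto
    also have "(\<Union>t\<in>B. {\<omega>\<in>space M. S \<omega> = t}) = space M"
      using S_in by auto
    finally show ?thesis
      by (simp add: prob_space)
  qed
  show ?thesis
    unfolding S_def[symmetric] Z_def[symmetric]
  proof (rule measure_eqI_countable[where A = UNIV])
    fix h
    show "emeasure (distr M (count_space UNIV) Z) {h} = emeasure (measure_pmf q) {h}"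
      using prob_Z[of h] Z_measurable
      by (simp add: emeasure_distr emeasure_eq_measure emeasure_pmf_single)
  qed auto
qed

end

section \<open>Sampling the noiseless process from the noisy one\<close>

locale block_sampled_rumor = prob_space M for M :: "'a measure" +
  fixes n :: nat and Y :: "nat \<Rightarrow> nat \<Rightarrow> 'a \<Rightarrow> bool" and H :: "nat \<Rightarrow> nat \<Rightarrow> 'a \<Rightarrow> nat"
    and p :: real and Q :: "nat \<Rightarrow> nat pmf" and L :: nat
  assumes indep_rounds:
      "indep_vars (\<lambda>_. count_space UNIV) (\<lambda>(t, i) \<omega>. (Y t i \<omega>, H t i \<omega>)) ({1..} \<times> {1..n})"
    and distr_rounds: "\<And>t i. 1 \<le> t \<Longrightarrow> i \<in> {1..n} \<Longrightarrow>
      distr M (count_space UNIV) (\<lambda>\<omega>. (Y t i \<omega>, H t i \<omega>)) = measure_pmf (pair_pmf (bernoulli_pmf p) (Q i))"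
    and p_bounds: "0 \<le> p" "p \<le> 1"
    and L_pos: "1 \<le> L"
begin

definition block_choice :: "nat \<Rightarrow> nat \<Rightarrow> 'a \<Rightarrow> nat" where
  "block_choice k i \<omega> = H (first_in (round_block L k) (\<lambda>t. Y t i \<omega>)) i \<omega>"

lemma random_variable_round:
  "1 \<le> t \<Longrightarrow> i \<in> {1..n} \<Longrightarrow> random_variable (count_space UNIV) (\<lambda>\<omega>. (Y t i \<omega>, H t i \<omega>))"
  using indep_rounds unfolding indep_vars_def2 by auto

lemma indep_rounds_of_agent:
  assumes "i \<in> {1..n}" and "T \<subseteq> {1..}"
  shows "indep_vars (\<lambda>_. count_space UNIV) (\<lambda>t \<omega>. (Y t i \<omega>, H t i \<omega>)) T"
proof -
  have "(\<lambda>t. (t, i)) ` T \<subseteq> {1..} \<times> {1..n}"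
    using assms by auto
  from indep_vars_reindex[OF indep_rounds _ this] show ?thesis
    by (simp add: inj_on_def)
qed

lemma distr_block_choice:
  assumes "1 \<le> k" and "i \<in> {1..n}"
  shows "distr M (count_space UNIV) (block_choice k i) = measure_pmf (Q i)"
  using distr_snd_at_first_in[OF indep_rounds_of_agent[OF assms(2) round_block_subset]
      finite_round_block round_block_nonempty[OF L_pos assms(1)]]
    distr_rounds round_block_subset assms(2)
  unfolding block_choice_def by fastforce

lemma indep_block_choice:
  "indep_vars (\<lambda>_. count_space UNIV) (\<lambda>(k, i). block_choice k i) ({1..} \<times> {1..n})"
proof -
  define X where "X = (\<lambda>(t, i) \<omega>. (Y t i \<omega>, H t i \<omega>))"
  define K where "K x = round_block L (fst x) \<times> {snd x}" for x :: "nat \<times> nat"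
  define \<phi> where "\<phi> x v = snd (v (first_in (round_block L (fst x)) (\<lambda>t. fst (v (t, snd x))), snd x))"
    for x :: "nat \<times> nat" and v :: "nat \<times> nat \<Rightarrow> bool \<times> nat"
  have "disjoint_family_on K ({1..} \<times> {1..n})"
    unfolding disjoint_family_on_def K_def using disjoint_round_block by (fastforce simp: prod_eq_iff)
  moreover have "K x \<subseteq> {1..} \<times> {1..n}" if "x \<in> {1..} \<times> {1..n}" for x
    using that round_block_subset by (auto simp: K_def)
  ultimately have "indep_vars (\<lambda>x. PiM (K x) (\<lambda>_. count_space UNIV))
      (\<lambda>x \<omega>. \<lambda>y\<in>K x. X y \<omega>) ({1..} \<times> {1..n})"
    by (intro indep_vars_restrict[OF indep_rounds[folded X_def]]) auto
  then have "indep_vars (\<lambda>_. count_space UNIV) (\<lambda>x \<omega>. \<phi> x (\<lambda>y\<in>K x. X y \<omega>)) ({1..} \<times> {1..n})"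
    by (rule indep_vars_compose2) (simp add: K_def measurable_PiM_count_space_countable)
  moreover have "\<phi> (k, i) (\<lambda>y\<in>K (k, i). X y \<omega>) = block_choice k i \<omega>" if "1 \<le> k" for k i \<omega>
  proof -
    have "first_in (round_block L k) (\<lambda>t. fst ((\<lambda>y\<in>K (k, i). X y \<omega>) (t, i)))
        = first_in (round_block L k) (\<lambda>t. Y t i \<omega>)"
      by (rule first_in_cong) (simp add: K_def X_def)
    moreover have "first_in (round_block L k) (\<lambda>t. Y t i \<omega>) \<in> round_block L k"
      using round_block_nonempty[OF L_pos that] by (simp add: first_in_mem)
    ultimately show ?thesis
      by (simp add: \<phi>_def K_def X_def block_choice_def)
  qed
  ultimately show ?thesis
    by (subst (asm) indep_vars_cong[OF refl _ refl, where Y = "\<lambda>(k, i). block_choice k i"]) auto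
qed

lemma silent_block_in_events:
  assumes "i \<in> {1..n}"
  shows "{\<omega>\<in>space M. \<forall>t\<in>round_block L k. \<not> Y t i \<omega>} \<in> events"
proof (rule events_through_restrict[where J = "round_block L k" and X = "\<lambda>t \<omega>. (Y t i \<omega>, H t i \<omega>)"
      and \<Phi> = "\<lambda>v. \<forall>t\<in>round_block L k. \<not> fst (v t)" and P = "\<lambda>b. b"])
  show "random_variable (count_space UNIV) (\<lambda>\<omega>. (Y t i \<omega>, H t i \<omega>))" if "t \<in> round_block L k" for t
    using that round_block_subset[of L k] assms by (intro random_variable_round) auto
qed simp_all

lemma prob_silent_block:
  assumes "1 \<le> k" and "i \<in> {1..n}"
  shows "prob {\<omega>\<in>space M. \<forall>t\<in>round_block L k. \<not> Y t i \<omega>} = (1 - p) ^ L"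
proof -
  let ?X = "\<lambda>t \<omega>. (Y t i \<omega>, H t i \<omega>)"
  have "{\<omega>\<in>space M. \<forall>t\<in>round_block L k. \<not> Y t i \<omega>}
      = (\<Inter>t\<in>round_block L k. ?X t -` ({False} \<times> UNIV) \<inter> space M)"
    using round_block_nonempty[OF L_pos assms(1)] by auto
  also have "prob \<dots> = (\<Prod>t\<in>round_block L k. prob (?X t -` ({False} \<times> UNIV) \<inter> space M))"
    using round_block_nonempty[OF L_pos assms(1)]
    by (intro indep_varsD[OF indep_rounds_of_agent[OF assms(2) round_block_subset]]) auto
  also have "\<dots> = (\<Prod>t\<in>round_block L k. 1 - p)"
  proof (intro prod.cong refl)
    fix t assume "t \<in> round_block L k"
    then have t: "1 \<le> t"
      using round_block_subset by auto
    have "prob (?X t -` ({False} \<times> UNIV) \<inter> space M) = measure (distr M (count_space UNIV) (?X t)) ({False} \<times> UNIV)"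
      using random_variable_round[OF t assms(2)] by (simp add: measure_distr)
    also have "\<dots> = 1 - p"
      using p_bounds by (simp add: distr_rounds[OF t assms(2)] measure_pmf_prob_product measure_pmf_single)
    finally show "prob (?X t -` ({False} \<times> UNIV) \<inter> space M) = 1 - p" .
  qed
  also have "\<dots> = (1 - p) ^ L"
    using assms(1) by (simp add: card_round_block)
  finally show ?thesis .
qed

lemma noisy_inf_in_events:
  "{\<omega>\<in>space M. P (noisy_inf n istar (\<lambda>t i. Y t i \<omega>) (\<lambda>t i. H t i \<omega>) T)} \<in> events"
proof (rule events_through_restrict[where J = "{1..T} \<times> {1..n}" and X = "\<lambda>(t, i) \<omega>. (Y t i \<omega>, H t i \<omega>)"
      and \<Phi> = "\<lambda>v. noisy_inf n istar (\<lambda>t i. fst (v (t, i))) (\<lambda>t i. snd (v (t, i))) T" and P = P])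
  show "random_variable (count_space UNIV) ((\<lambda>(t, i) \<omega>. (Y t i \<omega>, H t i \<omega>)) x)"
    if "x \<in> {1..T} \<times> {1..n}" for x
    using that by (auto intro: random_variable_round)
  show "noisy_inf n istar (\<lambda>t i. Y t i \<omega>) (\<lambda>t i. H t i \<omega>) T
      = noisy_inf n istar (\<lambda>t i. fst ((\<lambda>x\<in>{1..T} \<times> {1..n}. (\<lambda>(t, i) \<omega>. (Y t i \<omega>, H t i \<omega>)) x \<omega>) (t, i)))
          (\<lambda>t i. snd ((\<lambda>x\<in>{1..T} \<times> {1..n}. (\<lambda>(t, i) \<omega>. (Y t i \<omega>, H t i \<omega>)) x \<omega>) (t, i))) T" for \<omega>
    by (rule noisy_inf_cong) auto
qed simp

lemma noiseless_block_choice_in_events: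
  "{\<omega>\<in>space M. P (noiseless_inf n istar (\<lambda>k i. block_choice k i \<omega>) j)} \<in> events"
proof (rule events_through_restrict[where J = "{1..j} \<times> {1..n}" and X = "\<lambda>(k, i). block_choice k i"
      and \<Phi> = "\<lambda>v. noiseless_inf n istar (\<lambda>k i. v (k, i)) j" and P = P])
  show "random_variable (count_space UNIV) ((\<lambda>(k, i). block_choice k i) x)"
    if "x \<in> {1..j} \<times> {1..n}" for x
    using indep_block_choice that unfolding indep_vars_def2 by auto
  show "noiseless_inf n istar (\<lambda>k i. block_choice k i \<omega>) j
      = noiseless_inf n istar (\<lambda>k i. (\<lambda>x\<in>{1..j} \<times> {1..n}. (\<lambda>(k, i). block_choice k i) x \<omega>) (k, i)) j" for \<omega>
    by (rule noiseless_inf_cong) auto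
qed simp

lemma prob_noisy_not_spread_le:
  assumes "istar \<in> {1..n}"
  shows "prob {\<omega>\<in>space M. noisy_inf n istar (\<lambda>t i. Y t i \<omega>) (\<lambda>t i. H t i \<omega>) (j * L) \<noteq> {1..n}}
       \<le> prob {\<omega>\<in>space M. noiseless_inf n istar (\<lambda>k i. block_choice k i \<omega>) j \<noteq> {1..n}}
         + real (n * j) * (1 - p) ^ L"
proof -
  let ?silent = "\<lambda>(k, i). {\<omega>\<in>space M. \<forall>t\<in>round_block L k. \<not> Y t i \<omega>}"
  let ?J = "{1..j} \<times> {1..n}"
  have silent_events: "?silent x \<in> events" if "x \<in> ?J" for x
    using that silent_block_in_events by auto
  have "prob {\<omega>\<in>space M. noisy_inf n istar (\<lambda>t i. Y t i \<omega>) (\<lambda>t i. H t i \<omega>) (j * L) \<noteq> {1..n}}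
      \<le> prob ({\<omega>\<in>space M. noiseless_inf n istar (\<lambda>k i. block_choice k i \<omega>) j \<noteq> {1..n}} \<union> (\<Union>x\<in>?J. ?silent x))"
  proof (intro finite_measure_mono subsetI)
    fix \<omega> assume "\<omega> \<in> {\<omega>\<in>space M. noisy_inf n istar (\<lambda>t i. Y t i \<omega>) (\<lambda>t i. H t i \<omega>) (j * L) \<noteq> {1..n}}"
    then show "\<omega> \<in> {\<omega>\<in>space M. noiseless_inf n istar (\<lambda>k i. block_choice k i \<omega>) j \<noteq> {1..n}} \<union> (\<Union>x\<in>?J. ?silent x)"
      using noisy_inf_not_spread_cases[OF assms, of "\<lambda>t i. Y t i \<omega>" "\<lambda>t i. H t i \<omega>" j L]
      unfolding block_choice_def by auto
  qed (use silent_events noiseless_block_choice_in_events in auto)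
  also have "\<dots> \<le> prob {\<omega>\<in>space M. noiseless_inf n istar (\<lambda>k i. block_choice k i \<omega>) j \<noteq> {1..n}}
      + (\<Sum>x\<in>?J. prob (?silent x))"
    using silent_events noiseless_block_choice_in_events
    by (intro order.trans[OF measure_Un_le] add_left_mono finite_measure_subadditive_finite) auto
  also have "(\<Sum>x\<in>?J. prob (?silent x)) = (\<Sum>x\<in>?J. (1 - p) ^ L)"
    by (intro sum.cong) (auto simp: prob_silent_block)
  also have "\<dots> = real (n * j) * (1 - p) ^ L"
    by (simp add: card_cartesian_product)
  finally show ?thesis .
qed

lemma prob_spread_time_gt_le:
  assumes "istar \<in> {1..n}" and "real (j * L) \<le> x"
  shows "prob {\<omega>\<in>space M. ereal x < ereal_of_enat (spread_time n (noisy_inf n istar (\<lambda>t i. Y t i \<omega>) (\<lambda>t i. H t i \<omega>)))}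
       \<le> prob {\<omega>\<in>space M. noiseless_inf n istar (\<lambda>k i. block_choice k i \<omega>) j \<noteq> {1..n}}
         + real (n * j) * (1 - p) ^ L"
proof -
  have "prob {\<omega>\<in>space M. ereal x < ereal_of_enat (spread_time n (noisy_inf n istar (\<lambda>t i. Y t i \<omega>) (\<lambda>t i. H t i \<omega>)))}
      \<le> prob {\<omega>\<in>space M. noisy_inf n istar (\<lambda>t i. Y t i \<omega>) (\<lambda>t i. H t i \<omega>) (j * L) \<noteq> {1..n}}"
    using noisy_inf_not_full_if_spread_time_gt[OF assms(1) _ assms(2)]
    by (intro finite_measure_mono[OF _ noisy_inf_in_events]) blast
  also have "\<dots> \<le> prob {\<omega>\<in>space M. noiseless_inf n istar (\<lambda>k i. block_choice k i \<omega>) j \<noteq> {1..n}}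
      + real (n * j) * (1 - p) ^ L"
    by (rule prob_noisy_not_spread_le[OF assms(1)])
  finally show ?thesis .
qed

end

lemma prob_noiseless_not_spread_eq:
  fixes G :: "nat \<Rightarrow> nat \<Rightarrow> 'a \<Rightarrow> nat" and G' :: "nat \<Rightarrow> nat \<Rightarrow> 'b \<Rightarrow> nat"
  assumes "prob_space M" "prob_space N" "1 \<le> j" "1 \<le> n"
    and "prob_space.indep_vars M (\<lambda>_. count_space UNIV) (\<lambda>(k, i). G k i) ({1..} \<times> {1..n})"
    and "prob_space.indep_vars N (\<lambda>_. count_space UNIV) (\<lambda>(k, i). G' k i) ({1..} \<times> {1..n})"
    and "\<And>k i. 1 \<le> k \<Longrightarrow> i \<in> {1..n} \<Longrightarrow>
      distr M (count_space UNIV) (G k i) = distr N (count_space UNIV) (G' k i)"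
  shows "measure M {\<omega>\<in>space M. noiseless_inf n istar (\<lambda>k i. G k i \<omega>) j \<noteq> {1..n}}
       = measure N {\<omega>\<in>space N. noiseless_inf n istar (\<lambda>k i. G' k i \<omega>) j \<noteq> {1..n}}"
proof -
  let ?J = "{1..j} \<times> {1..n}" and ?S = "{f. noiseless_inf n istar (\<lambda>k i. f (k, i)) j \<noteq> {1..n}}"
  have restrict: "noiseless_inf n istar (\<lambda>k i. (\<lambda>x\<in>?J. F x) (k, i)) j = noiseless_inf n istar (\<lambda>k i. F (k, i)) j"
    for F :: "nat \<times> nat \<Rightarrow> nat"
    by (rule noiseless_inf_cong) auto
  have "?J \<subseteq> {1..} \<times> {1..n}" "?J \<noteq> {}"
    using assms(3,4) by auto
  then have "measure M {\<omega>\<in>space M. (\<lambda>x\<in>?J. (\<lambda>(k, i). G k i) x \<omega>) \<in> ?S}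
      = measure N {\<omega>\<in>space N. (\<lambda>x\<in>?J. (\<lambda>(k, i). G' k i) x \<omega>) \<in> ?S}"
    by (intro prob_eq_if_indep_same_distr assms(1,2) prob_space.indep_vars_subset[OF assms(1,5)]
        prob_space.indep_vars_subset[OF assms(2,6)])
       (auto simp: assms(7))
  then show ?thesis
    unfolding mem_Collect_eq restrict by simp
qed

lemma Nhon_nonempty:
  assumes "2 \<le> n" and "hon_connected E n" and "i \<in> {1..n}"
  shows "Nhon E n i \<noteq> {}"
proof -
  obtain b where b: "b \<in> {1..n}" "b \<noteq> i"
    using \<open>2 \<le> n\<close> by (intro that[of "if i = 1 then 2 else 1"]) auto
  then have "(i, b) \<in> (E \<inter> {1..n} \<times> {1..n})\<^sup>*"
    using assms unfolding hon_connected_def by blast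
  then obtain y where "(i, y) \<in> E \<inter> {1..n} \<times> {1..n}"
    using b(2) by (metis converse_rtranclE)
  then show ?thesis
    unfolding Nhon_def by auto
qed

lemma Upsilon_bounds:
  assumes "2 \<le> n" and "hon_connected E n"
  shows "0 < Upsilon E n m" "Upsilon E n m \<le> 1"
proof -
  have ratio: "0 < real (card (Nhon E n i)) / real (deg E n m i)
             \<and> real (card (Nhon E n i)) / real (deg E n m i) \<le> 1" if "i \<in> {1..n}" for i
  proof -
    have "card (Nhon E n i) \<le> deg E n m i"
      unfolding deg_def Nhon_def by (intro card_mono) auto
    moreover have "0 < card (Nhon E n i)"
      using Nhon_nonempty[OF assms that] by (simp add: card_gt_0_iff Nhon_def)
    ultimately show ?thesis
      by (simp add: divide_le_eq_1)
  qed
  have "Upsilon E n m \<in> (\<lambda>i. real (card (Nhon E n i)) / real (deg E n m i)) ` {1..n}"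
    unfolding Upsilon_def using \<open>2 \<le> n\<close> by (intro Min_in) auto
  then show "0 < Upsilon E n m" "Upsilon E n m \<le> 1"
    using ratio by auto
qed

lemma nat_floor_div_bounds:
  fixes x :: real
  assumes "real j \<le> x" and "0 < j"
  defines "L \<equiv> nat \<lfloor>x\<rfloor> div j"
  shows "1 \<le> L" "real (L * j) \<le> x" "x < real (L * j + j)"
proof -
  have "j \<le> nat \<lfloor>x\<rfloor>"
    using assms(1) by linarith
  then show "1 \<le> L"
    unfolding L_def using div_le_mono[of j "nat \<lfloor>x\<rfloor>" j] assms(2) by simp
  have "L * j \<le> nat \<lfloor>x\<rfloor>"
    unfolding L_def by simp
  then show "real (L * j) \<le> x"
    using assms(1) by linarith
  have "nat \<lfloor>x\<rfloor> < L * j + j"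
    unfolding L_def using assms(2) by (metis div_mult_mod_eq add_less_cancel_left mod_less_divisor)
  then show "x < real (L * j + j)"
    using assms(1) by linarith
qed

lemma ln_ge_one: "3 \<le> j \<Longrightarrow> 1 \<le> ln (real j)"
  using exp_le by (subst ln_ge_iff) auto

lemma geometric_block_bound:
  fixes U \<iota> :: real
  assumes U: "0 < U" "U \<le> 1" and "3 \<le> j" and "1 < \<iota>"
    and L: "\<iota> * real j * ln (real j) / U < real (L * j + j)"
  shows "real j * (1 - U) ^ L \<le> 27 * real j powr (1 - \<iota>)"
proof -
  have "real j * (\<iota> * ln (real j) / U) < real j * (real L + 1)"
    using L by (simp add: algebra_simps)
  then have "\<iota> * ln (real j) / U < real L + 1"
    using \<open>3 \<le> j\<close> by (simp only: mult_less_cancel_left_pos of_nat_0_less_iff)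
  then have UL: "\<iota> * ln (real j) - 1 \<le> U * real L"
    using U by (simp add: field_simps)
  have "(1 - U) ^ L \<le> exp (- U) ^ L"
    using U exp_minus_ge[of U] by (intro power_mono) auto
  also have "\<dots> = exp (- (U * real L))"
    by (simp add: exp_of_nat_mult[symmetric] ac_simps)
  also have "\<dots> \<le> exp (1 - \<iota> * ln (real j))"
    using UL by simp
  also have "\<dots> = exp 1 * real j powr (- \<iota>)"
    using \<open>3 \<le> j\<close> by (simp add: powr_def exp_diff exp_minus field_simps)
  finally have "real j * (1 - U) ^ L \<le> exp 1 * (real j * real j powr (- \<iota>))"
    by (simp add: mult_left_mono ac_simps)
  also have "real j * real j powr (- \<iota>) = real j powr (1 - \<iota>)"
    using \<open>3 \<le> j\<close> by (simp add: powr_diff powr_minus field_simps)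
  also have "exp 1 * real j powr (1 - \<iota>) \<le> 27 * real j powr (1 - \<iota>)"
    using exp_le by (intro mult_right_mono) auto
  finally show ?thesis .
qed

lemma block_length:
  fixes U \<iota> :: real
  assumes U: "0 < U" "U \<le> 1" and j: "3 \<le> j" and \<iota>: "1 < \<iota>"
  obtains L where "1 \<le> L" "real (L * j) \<le> \<iota> * real j * ln (real j) / U"
    "real j * (1 - U) ^ L \<le> 27 * real j powr (1 - \<iota>)"
proof -
  define x where "x = \<iota> * real j * ln (real j) / U"
  have "1 \<le> \<iota> * ln (real j)"
    using mult_mono[of 1 \<iota> 1 "ln (real j)"] \<iota> ln_ge_one[OF j] by simp
  also have "\<dots> \<le> \<iota> * ln (real j) / U"
    using U calculation by (simp add: le_divide_eq mult_left_le)
  moreover have "x = real j * (\<iota> * ln (real j) / U)"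
    unfolding x_def by simp
  ultimately have "real j \<le> x"
    using mult_left_mono[of 1 "\<iota> * ln (real j) / U" "real j"] by simp
  from nat_floor_div_bounds[OF this] j show ?thesis
    using geometric_block_bound[OF U j \<iota>] unfolding x_def by (intro that) auto
qed

theorem mainTheorem13:
  fixes E :: "(nat \<times> nat) set" and n m istar j :: nat and \<iota> :: real
    and M1 :: "'a measure" and Y :: "nat \<Rightarrow> nat \<Rightarrow> 'a \<Rightarrow> bool" and H :: "nat \<Rightarrow> nat \<Rightarrow> 'a \<Rightarrow> nat"
    and M2 :: "'b measure" and H' :: "nat \<Rightarrow> nat \<Rightarrow> 'b \<Rightarrow> nat"
  assumes graph: "simple_graph E (n + m)"
    and n2: "n \<ge> 2"
    and conn: "hon_connected E n"
    and istar: "istar \<in> {1..n}"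
    and P1: "prob_space M1"
    and indep1: "prob_space.indep_vars M1 (\<lambda>_. count_space UNIV)
                   (\<lambda>(j, i) \<omega>. (Y j i \<omega>, H j i \<omega>)) ({1..} \<times> {1..n})"
    and distr1: "\<And>j i. j \<ge> 1 \<Longrightarrow> i \<in> {1..n} \<Longrightarrow>
                   distr M1 (count_space UNIV) (\<lambda>\<omega>. (Y j i \<omega>, H j i \<omega>)) =
                   measure_pmf (pair_pmf (bernoulli_pmf (Upsilon E n m)) (pmf_of_set (Nhon E n i)))"
    and P2: "prob_space M2"
    and indep2: "prob_space.indep_vars M2 (\<lambda>_. count_space UNIV)
                   (\<lambda>(j, i) \<omega>. H' j i \<omega>) ({1..} \<times> {1..n})"
    and distr2: "\<And>j i. j \<ge> 1 \<Longrightarrow> i \<in> {1..n} \<Longrightarrow>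
                   distr M2 (count_space UNIV) (H' j i) = measure_pmf (pmf_of_set (Nhon E n i))"
    and j3: "j \<ge> 3"
    and iota: "\<iota> > 1"
  shows "measure M1 {\<omega> \<in> space M1.
            ereal_of_enat (spread_time n (noisy_inf n istar (\<lambda>j i. Y j i \<omega>) (\<lambda>j i. H j i \<omega>)))
              > ereal (\<iota> * real j * ln (real j) / Upsilon E n m)}
         \<le> measure M2 {\<omega> \<in> space M2.
              spread_time n (noiseless_inf n istar (\<lambda>j i. H' j i \<omega>)) > enat j}
           + 27 * real n * real j powr (1 - \<iota>)"
proof -
  interpret M1: prob_space M1 by (rule P1)
  define U where "U = Upsilon E n m"
  have U: "0 < U" "U \<le> 1"
    unfolding U_def using Upsilon_bounds[OF n2 conn] by auto
  obtain L where L: "1 \<le> L" "real (L * j) \<le> \<iota> * real j * ln (real j) / U"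
    "real j * (1 - U) ^ L \<le> 27 * real j powr (1 - \<iota>)"
    using block_length[OF U j3 iota] .
  interpret block_sampled_rumor M1 n Y H U "\<lambda>i. pmf_of_set (Nhon E n i)" L
    by (rule block_sampled_rumor.intro[OF P1 block_sampled_rumor_axioms.intro])
       (use indep1 distr1 U L(1) in \<open>simp_all add: U_def\<close>)
  have "measure M1 {\<omega> \<in> space M1. ereal_of_enat (spread_time n (noisy_inf n istar (\<lambda>t i. Y t i \<omega>) (\<lambda>t i. H t i \<omega>)))
          > ereal (\<iota> * real j * ln (real j) / U)}
      \<le> M1.prob {\<omega>\<in>space M1. noiseless_inf n istar (\<lambda>k i. block_choice k i \<omega>) j \<noteq> {1..n}}
        + real (n * j) * (1 - U) ^ L"
    using L(2) by (intro prob_spread_time_gt_le[OF istar]) (simp add: mult.commute)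
  also have "M1.prob {\<omega>\<in>space M1. noiseless_inf n istar (\<lambda>k i. block_choice k i \<omega>) j \<noteq> {1..n}}
      = measure M2 {\<omega>\<in>space M2. spread_time n (noiseless_inf n istar (\<lambda>k i. H' k i \<omega>)) > enat j}"
    using spread_time_gt_iff[OF mono_noiseless_inf noiseless_inf_subset[OF istar]] j3 n2
    by (subst prob_noiseless_not_spread_eq[OF P1 P2 _ _ indep_block_choice indep2])
       (auto simp: distr_block_choice distr2)
  also have "real (n * j) * (1 - U) ^ L \<le> 27 * real n * real j powr (1 - \<iota>)"
    using mult_left_mono[OF L(3), of "real n"] by (simp add: ac_simps)
  finally show ?thesis
    unfolding U_def by simp
qed

end
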